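(* Let $\mathcal H_a,\mathcal H_b$ be finite-dimensional Hilbert spaces and let $H$ be a Hermitian operator on $\mathcal H_a\otimes\mathcal H_b$. Then $$\mathcal C_{\rm P}^{1}(H)=\|H\|_\infty-\big(\Delta E_{\rm Sep}(H)+\Delta E_{\rm Sep}(-H)\big).$$
   Context: For a density operator $\rho$ on $\mathcal H_a\otimes\mathcal H_b$, the parallel capacity is $\mathcal C_{\rm P}(\rho,H):=\max_{U_a,U_b}\mathrm{tr}[(U_a\otimes U_b)\rho(U_a\otimes U_b)^\dagger H]-\min_{U_a,U_b}\mathrm{tr}[(U_a\otimes U_b)\rho(U_a\otimes U_b)^\dagger H]$, where $U_a,U_b$ range over all unitaries on $\mathcal H_a$, $\mathcal H_b$ respectively. Let $\mathcal S^1$ be the set of separable density operators on $\mathcal H_a\otimes\mathcal H_b$ (convex hull of product states $\rho_a\otimes\rho_b$), and $\mathcal C_{\rm P}^1(H):=\max_{\rho\in\mathcal S^1}\mathcal C_{\rm P}(\rho,H)$. Let $E_0$ and $E_{\max}$ denote the smallest and largest eigenvalues of $H$, and set $\|H\|_\infty:=E_{\max}-E_0$. The entanglement gap energy is $\Delta E_{\rm Sep}(H):=\min_{\rho\in\mathcal S^1}\mathrm{tr}[\rho H]-E_0$ (and $\Delta E_{\rm Sep}(-H)$ is the same quantity for $-H$, whose smallest eigenvalue is $-E_{\max}$). *)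

theory Defs
  imports "HOL-Analysis.Analysis"
begin

text \<open>Finite-dimensional Hilbert spaces are modelled as complex coordinate spaces
  indexed by finite types; operators are complex square matrices.
  The tensor product space of 'a and 'b is indexed by the pair type.\<close>

definition adj :: "complex^'n^'m \<Rightarrow> complex^'m^'n" where
  "adj A = (\<chi> i j. cnj (A $ j $ i))"

definition mtrace :: "complex^'n^'n \<Rightarrow> complex" where
  "mtrace A = (\<Sum>i\<in>UNIV. A $ i $ i)"

definition hermitian :: "complex^'n^'n \<Rightarrow> bool" where
  "hermitian A \<longleftrightarrow> adj A = A"

definition unitary :: "complex^'n^'n \<Rightarrow> bool" where
  "unitary U \<longleftrightarrow> U ** adj U = mat 1 \<and> adj U ** U = mat 1"

definition psd :: "complex^'n^'n \<Rightarrow> bool" where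
  "psd A \<longleftrightarrow> hermitian A \<and>
     (\<forall>v::complex^'n. (\<Sum>i\<in>UNIV. \<Sum>j\<in>UNIV. cnj (v $ i) * A $ i $ j * v $ j) \<in> \<real> \<and>
        0 \<le> Re (\<Sum>i\<in>UNIV. \<Sum>j\<in>UNIV. cnj (v $ i) * A $ i $ j * v $ j))"

definition density :: "complex^'n^'n \<Rightarrow> bool" where
  "density \<rho> \<longleftrightarrow> psd \<rho> \<and> mtrace \<rho> = 1"

definition kron :: "complex^'a^'a \<Rightarrow> complex^'b^'b \<Rightarrow> complex^('a \<times> 'b)^('a \<times> 'b)" where
  "kron A B = (\<chi> p q. A $ fst p $ fst q * B $ snd p $ snd q)"

definition Sep :: "(complex^('a::finite \<times> 'b::finite)^('a \<times> 'b)) set" where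
  "Sep = convex hull {kron ra rb | ra rb. density ra \<and> density rb}"

text \<open>Energy tr[\<rho> H] (real for Hermitian \<rho>, H).\<close>
definition energy :: "complex^'n^'n \<Rightarrow> complex^'n^'n \<Rightarrow> real" where
  "energy \<rho> H = Re (mtrace (\<rho> ** H))"

text \<open>Real eigenvalues of a matrix; for Hermitian matrices these are all eigenvalues.\<close>
definition real_eigenvalues :: "complex^'n^'n \<Rightarrow> real set" where
  "real_eigenvalues H = {x. \<exists>v. v \<noteq> 0 \<and> H *v v = x *\<^sub>R v}"

definition E0 :: "complex^'n^'n \<Rightarrow> real" where
  "E0 H = Min (real_eigenvalues H)"

definition Emax :: "complex^'n^'n \<Rightarrow> real" where
  "Emax H = Max (real_eigenvalues H)"

definition opnorm_inf :: "complex^'n^'n \<Rightarrow> real" where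
  "opnorm_inf H = Emax H - E0 H"

definition CP :: "complex^('a::finite \<times> 'b::finite)^('a \<times> 'b) \<Rightarrow> complex^('a \<times> 'b)^('a \<times> 'b) \<Rightarrow> real" where
  "CP \<rho> H =
     (SUP (Ua, Ub) \<in> {(Ua :: complex^'a^'a, Ub :: complex^'b^'b). unitary Ua \<and> unitary Ub}.
        energy (kron Ua Ub ** \<rho> ** adj (kron Ua Ub)) H)
   - (INF (Ua, Ub) \<in> {(Ua :: complex^'a^'a, Ub :: complex^'b^'b). unitary Ua \<and> unitary Ub}.
        energy (kron Ua Ub ** \<rho> ** adj (kron Ua Ub)) H)"

definition CP1 :: "complex^('a::finite \<times> 'b::finite)^('a \<times> 'b) \<Rightarrow> real" where
  "CP1 H = (SUP \<rho> \<in> (Sep :: (complex^('a \<times> 'b)^('a \<times> 'b)) set). CP \<rho> H)"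

definition gapSep :: "complex^('a::finite \<times> 'b::finite)^('a \<times> 'b) \<Rightarrow> real" where
  "gapSep H = (INF \<rho> \<in> (Sep :: (complex^('a \<times> 'b)^('a \<times> 'b)) set). energy \<rho> H) - E0 H"

end

theory Submission
  imports Defs
begin

text \<open>Every separable state is a mixture of pure product states, so over separable states the
  energy ranges exactly between the minimum \<open>m\<close> and maximum \<open>M\<close> of the energy on pure product
  states; in particular \<open>\<Delta>E_Sep(H) = m - E_0\<close> and \<open>\<Delta>E_Sep(-H) = E_max - M\<close>.
  Local unitaries preserve separability, so \<open>C_P(\<rho>,H) \<le> M - m\<close> for separable \<open>\<rho>\<close>; the bound is
  attained at a maximising product state, which local unitaries (Householder reflections, after
  a phase correction) rotate onto a minimising one. Hence \<open>C_P^1(H) = M - m\<close>.\<close>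

section \<open>Inner products, adjoints and quadratic forms\<close>

definition cinner :: "complex^'n \<Rightarrow> complex^'n \<Rightarrow> complex" where
  "cinner x y = (\<Sum>i\<in>UNIV. cnj (x$i) * y$i)"

definition quad_form :: "complex^'n^'n \<Rightarrow> complex^'n \<Rightarrow> complex" where
  "quad_form A v = cinner v (A *v v)"

definition outer :: "complex^'n \<Rightarrow> complex^'n^'n" where
  "outer v = (\<chi> i j. v$i * cnj (v$j))"

lemma cinner_commute: "cnj (cinner x y) = cinner y x"
  by (simp add: cinner_def mult.commute)

lemma cinner_add_left: "cinner (x + y) z = cinner x z + cinner y z"
  by (simp add: cinner_def distrib_right sum.distrib)

lemma cinner_add_right: "cinner z (x + y) = cinner z x + cinner z y"
  by (simp add: cinner_def distrib_left sum.distrib)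

lemma cinner_diff_left: "cinner (x - y) z = cinner x z - cinner y z"
  by (simp add: cinner_def left_diff_distrib sum_subtractf)

lemma cinner_diff_right: "cinner z (x - y) = cinner z x - cinner z y"
  by (simp add: cinner_def right_diff_distrib sum_subtractf)

lemma cinner_scaleR_left: "cinner (t *\<^sub>R x) y = of_real t * cinner x y"
  unfolding cinner_def vector_scaleR_component by (simp add: scaleR_conv_of_real sum_distrib_left mult_ac)

lemma cinner_scaleR_right: "cinner x (t *\<^sub>R y) = of_real t * cinner x y"
  unfolding cinner_def vector_scaleR_component by (simp add: scaleR_conv_of_real sum_distrib_left mult_ac)

lemma inner_vec_eq_Re_cinner: "inner (x::complex^'n) y = Re (cinner y x)"
  by (simp add: inner_vec_def cinner_def inner_complex_def Re_sum mult.commute)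

lemma mult_cnj_self: "z * cnj z = of_real ((cmod z)^2)"
  using complex_norm_square[of z] by simp

lemma norm_vec_power2: "(norm (v::complex^'n))^2 = (\<Sum>i\<in>UNIV. (cmod (v$i))^2)"
  by (simp add: norm_vec_def L2_set_def sum_nonneg)

lemma cinner_self: "cinner v v = of_real ((norm v)^2)"
  by (simp add: cinner_def norm_vec_power2 mult_cnj_self mult.commute)

lemma cinner_adj: "cinner x (A *v y) = cinner (adj A *v x) y"
proof -
  have "cinner x (A *v y) = (\<Sum>i\<in>UNIV. \<Sum>k\<in>UNIV. cnj (x$i) * A$i$k * y$k)"
    by (simp add: cinner_def matrix_vector_mult_def sum_distrib_left mult.assoc)
  also have "\<dots> = (\<Sum>k\<in>UNIV. (\<Sum>i\<in>UNIV. cnj (x$i) * A$i$k) * y$k)"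
    by (subst sum.swap) (simp add: sum_distrib_right)
  also have "\<dots> = cinner (adj A *v x) y"
    by (simp add: cinner_def matrix_vector_mult_def adj_def mult.commute)
  finally show ?thesis .
qed

lemma adj_adj [simp]: "adj (adj A) = A"
  by (simp add: adj_def vec_eq_iff)

lemma adj_diff: "adj (A - B) = adj A - adj B"
  by (simp add: adj_def vec_eq_iff)

lemma adj_mult: "adj (A ** B) = adj B ** adj (A::complex^'n^'m)"
  by (simp add: adj_def matrix_matrix_mult_def vec_eq_iff mult.commute)

lemma adj_mat: "adj (mat (of_real r) :: complex^'n^'n) = mat (of_real r)"
  by (auto simp: adj_def mat_def vec_eq_iff)

lemma adj_outer: "adj (outer v) = outer v"
  by (simp add: adj_def outer_def vec_eq_iff mult.commute)

lemma hermitian_cnj_entry: "hermitian A \<Longrightarrow> cnj (A$j$i) = A$i$j"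
  unfolding hermitian_def adj_def by (metis vec_lambda_beta)

lemma hermitian_diag_real: "hermitian A \<Longrightarrow> A$i$i = of_real (Re (A$i$i))"
  using hermitian_cnj_entry[of A i i] by (simp add: complex_eq_iff)

lemma quad_form_hermitian_real:
  assumes "hermitian A" shows "quad_form A v \<in> \<real>"
proof -
  have "cnj (quad_form A v) = cinner (adj A *v v) v"
    using assms by (simp add: quad_form_def cinner_commute hermitian_def)
  also have "\<dots> = quad_form A v" by (simp add: quad_form_def cinner_adj)
  finally show ?thesis using Reals_cnj_iff by blast
qed

lemma quad_form_diff: "quad_form (A - B) v = quad_form A v - quad_form B v"
  by (simp add: quad_form_def matrix_vector_mult_diff_rdistrib cinner_diff_right)

lemma quad_form_scaleR: "quad_form A (t *\<^sub>R v) = of_real (t^2) * quad_form A v"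
proof -
  have "A *v (t *\<^sub>R v) = t *\<^sub>R (A *v v)"
    unfolding vec_eq_iff matrix_vector_mult_def vector_scaleR_component vec_lambda_beta
    by (simp add: scaleR_conv_of_real sum_distrib_left mult_ac)
  thus ?thesis
    by (simp add: quad_form_def cinner_scaleR_left cinner_scaleR_right power2_eq_square)
qed

lemma quad_form_outer: "quad_form (outer c) v = of_real ((cmod (cinner c v))^2)"
proof -
  have "quad_form (outer c) v = (\<Sum>i\<in>UNIV. cnj (v$i) * c$i * cinner c v)"
    by (simp add: quad_form_def outer_def cinner_def matrix_vector_mult_def
        sum_distrib_left mult_ac)
  also have "\<dots> = cinner v c * cinner c v"
    by (simp add: cinner_def sum_distrib_right)
  also have "\<dots> = cnj (cinner c v) * cinner c v" by (simp add: cinner_commute)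
  finally show ?thesis by (simp add: mult.commute mult_cnj_self)
qed

lemma psd_iff_quad_form:
  "psd A \<longleftrightarrow> hermitian A \<and> (\<forall>v. quad_form A v \<in> \<real> \<and> 0 \<le> Re (quad_form A v))"
proof -
  have "(\<Sum>i\<in>UNIV. \<Sum>j\<in>UNIV. cnj (v $ i) * A $ i $ j * v $ j) = quad_form A v" for v
    by (simp add: quad_form_def cinner_def matrix_vector_mult_def sum_distrib_left mult.assoc)
  then show ?thesis by (simp add: psd_def)
qed

lemma psd_iff_hermitian_nonneg:
  "psd A \<longleftrightarrow> hermitian A \<and> (\<forall>v. 0 \<le> Re (quad_form A v))"
  using psd_iff_quad_form quad_form_hermitian_real by blast

section \<open>Positive semidefinite matrices as sums of rank-one projectors\<close>

lemma matrix_vector_mult_axis: "A *v axis i (\<beta>::complex) = (\<chi> k. A$k$i * \<beta>)"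
  by (simp add: matrix_vector_mult_def axis_def vec_eq_iff if_distrib cong: if_cong)

lemma quad_form_add_axis:
  assumes h: "hermitian A"
  shows "quad_form A (v + axis i \<beta>) =
     quad_form A v + \<beta> * cnj ((A *v v)$i) + cnj \<beta> * (A *v v)$i + cnj \<beta> * \<beta> * A$i$i"
proof -
  have "cinner v (A *v axis i \<beta>) = \<beta> * (\<Sum>k\<in>UNIV. cnj (v$k) * A$k$i)"
    by (simp add: matrix_vector_mult_axis cinner_def sum_distrib_left mult_ac)
  also have "(\<Sum>k\<in>UNIV. cnj (v$k) * A$k$i) = cnj ((A *v v)$i)"
    by (simp add: matrix_vector_mult_def hermitian_cnj_entry[OF h] mult.commute)
  finally have "cinner v (A *v axis i \<beta>) = \<beta> * cnj ((A *v v)$i)" .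
  moreover have "cinner (axis i \<beta>) w = cnj \<beta> * w$i" for w
  proof -
    have "cinner (axis i \<beta>) w = (\<Sum>k\<in>UNIV. if k = i then cnj \<beta> * w$i else 0)"
      unfolding cinner_def by (rule sum.cong) (auto simp: axis_def)
    thus ?thesis by simp
  qed
  ultimately show ?thesis
    by (simp add: quad_form_def matrix_vector_right_distrib cinner_add_left cinner_add_right
        matrix_vector_mult_axis mult.assoc)
qed

lemma quad_form_axis: "hermitian A \<Longrightarrow> quad_form A (axis i 1) = A$i$i"
  using quad_form_add_axis[of A 0 i 1] by (simp add: quad_form_def cinner_def)

lemma nonneg_quadratic_imp_le:
  fixes q c a :: real
  assumes all: "\<And>t. 0 \<le> q - 2*t*c + t^2*c*a" and "0 \<le> a" "0 \<le> q" "0 \<le> c"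
  shows "c \<le> a * q"
proof (cases "c = 0 \<or> a = 0")
  case True
  then consider "c = 0" | "a = 0" "c > 0" using assms by fastforce
  then show ?thesis
  proof cases
    case 2
    have "0 \<le> q - 2*((q+1)/(2*c))*c + ((q+1)/(2*c))^2*c*a" by (rule all)
    also have "\<dots> = -1" using 2 by (simp add: field_simps)
    finally show ?thesis by simp
  qed (use assms in simp)
next
  case False
  hence a: "a > 0" using assms by simp
  have "0 \<le> q - 2*(1/a)*c + (1/a)^2*c*a" by (rule all)
  also have "\<dots> = q - c/a" using a by (simp add: field_simps power2_eq_square)
  finally show ?thesis using a by (simp add: field_simps)
qed

lemma psd_cauchy_schwarz:
  assumes p: "psd A"
  shows "(cmod ((A *v v)$i))^2 \<le> Re (A$i$i) * Re (quad_form A v)"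
proof -
  have h: "hermitian A" and pos: "\<And>w. 0 \<le> Re (quad_form A w)"
    using p by (auto simp: psd_iff_hermitian_nonneg)
  define b where "b = (A *v v)$i"
  define c where "c = (cmod b)^2"
  have bb: "cnj b * b = of_real c"
    unfolding c_def by (simp add: mult.commute mult_cnj_self)
  have a0: "0 \<le> Re (A$i$i)" using pos[of "axis i 1"] by (simp add: quad_form_axis[OF h])
  \<comment> \<open>evaluate the form at \<open>v - t b e\<^sub>i\<close>\<close>
  have "0 \<le> Re (quad_form A v) - 2*t*c + t^2*c*Re (A$i$i)" for t
  proof -
    have "quad_form A (v + axis i (- (of_real t * b))) =
       quad_form A v - 2 * of_real t * (cnj b * b) + of_real (t^2) * (cnj b * b) * A$i$i"
      unfolding quad_form_add_axis[OF h] b_def[symmetric]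
      by (simp add: algebra_simps power2_eq_square)
    thus ?thesis using pos[of "v + axis i (- (of_real t * b))"] by (simp add: bb)
  qed
  from nonneg_quadratic_imp_le[OF this a0 pos] show ?thesis by (simp add: c_def b_def)
qed

lemma psd_diag_nonneg:
  assumes "psd A" shows "0 \<le> Re (A$i$i)"
proof -
  have "hermitian A" "0 \<le> Re (quad_form A (axis i 1))"
    using assms by (auto simp: psd_iff_hermitian_nonneg)
  thus ?thesis by (simp add: quad_form_axis)
qed

lemma psd_diag_zero_imp_zero:
  assumes "psd A" "A$j$j = 0" shows "A$i$j = 0"
proof -
  have h: "hermitian A" using assms(1) by (simp add: psd_iff_hermitian_nonneg)
  have "(cmod ((A *v axis j 1)$i))^2 \<le> Re (A$i$i) * Re (quad_form A (axis j 1))"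
    by (rule psd_cauchy_schwarz[OF assms(1)])
  thus ?thesis using assms(2) by (simp add: quad_form_axis[OF h] matrix_vector_mult_axis)
qed

text \<open>One step of a Cholesky-type elimination.\<close>

lemma psd_diff_outer_column:
  assumes p: "psd A" and ne: "A$i$i \<noteq> 0"
  defines "c \<equiv> (\<chi> j. A$j$i / of_real (sqrt (Re (A$i$i))))"
  shows "psd (A - outer c)" and "(A - outer c)$i$i = 0"
    and "\<And>j. A$j$j = 0 \<Longrightarrow> (A - outer c)$j$j = 0"
proof -
  have h: "hermitian A" using p by (simp add: psd_iff_hermitian_nonneg)
  define r where "r = Re (A$i$i)"
  have Aii: "A$i$i = of_real r" using hermitian_diag_real[OF h, of i] unfolding r_def .
  have r: "r > 0" using psd_diag_nonneg[OF p, of i] ne Aii unfolding r_def[symmetric]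
    by (cases "r = 0") auto
  have sr: "of_real (sqrt r) * of_real (sqrt r) = (of_real r :: complex)"
  proof -
    have "sqrt r * sqrt r = r" using r by simp
    thus ?thesis by (metis of_real_mult)
  qed
  have oc: "outer c $ j $ k = A$j$i * A$i$k / of_real r" for j k
  proof -
    have "outer c $ j $ k = A$j$i * cnj (A$k$i) / (of_real (sqrt r) * of_real (sqrt r))"
      by (simp add: outer_def c_def r_def)
    thus ?thesis by (simp add: sr hermitian_cnj_entry[OF h])
  qed
  have "0 \<le> Re (quad_form (A - outer c) v)" for v
  proof -
    have "cinner c v = (A *v v)$i / of_real (sqrt r)"
      by (simp add: cinner_def c_def r_def matrix_vector_mult_def hermitian_cnj_entry[OF h]
          sum_divide_distrib mult.commute)
    hence "(cmod (cinner c v))^2 = (cmod ((A *v v)$i))^2 / r"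
      using r by (simp add: norm_divide power_divide)
    also have "\<dots> \<le> Re (quad_form A v)"
      using psd_cauchy_schwarz[OF p, of v i] r
      by (simp add: pos_divide_le_eq[OF r] mult.commute flip: r_def)
    finally show ?thesis by (simp add: quad_form_diff quad_form_outer)
  qed
  moreover have "hermitian (A - outer c)"
    using h by (simp add: hermitian_def adj_diff adj_outer)
  ultimately show "psd (A - outer c)" by (simp add: psd_iff_hermitian_nonneg)
  show "(A - outer c)$i$i = 0" using r by (simp add: oc Aii power2_eq_square)
  show "(A - outer c)$j$j = 0" if "A$j$j = 0" for j
    using psd_diag_zero_imp_zero[OF p that, of i] that by (simp add: oc)
qed

lemma psd_eq_sum_outer: "psd A \<Longrightarrow> \<exists>cs. A = sum_list (map outer cs)"
proof (induction "card {i. A$i$i \<noteq> 0}" arbitrary: A rule: less_induct)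
  case less
  show ?case
  proof (cases "\<exists>i. A$i$i \<noteq> 0")
    case False
    then have "A = 0" using psd_diag_zero_imp_zero[OF less.prems] by (simp add: vec_eq_iff)
    thus ?thesis by (intro exI[of _ "[]"]) simp
  next
    case True
    then obtain i where i: "A$i$i \<noteq> 0" by blast
    define c where "c = (\<chi> j. A$j$i / of_real (sqrt (Re (A$i$i))))"
    note step = psd_diff_outer_column[OF less.prems i, folded c_def]
    have "{j. (A - outer c)$j$j \<noteq> 0} \<subset> {j. A$j$j \<noteq> 0}" using step(2,3) i by auto
    hence "card {j. (A - outer c)$j$j \<noteq> 0} < card {j. A$j$j \<noteq> 0}"
      by (rule psubset_card_mono[OF finite])
    from less.hyps[OF this step(1)] obtain cs where "A - outer c = sum_list (map outer cs)"
      by blast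
    hence "A = sum_list (map outer (c # cs))" by (simp add: algebra_simps)
    thus ?thesis by blast
  qed
qed

lemma mtrace_add: "mtrace (A + B) = mtrace A + mtrace B"
  by (simp add: mtrace_def sum.distrib)

lemma mtrace_sum_list: "mtrace (sum_list (map f xs)) = (\<Sum>x\<leftarrow>xs. mtrace (f x))"
  by (induction xs) (simp_all add: mtrace_add, simp add: mtrace_def)

lemma mtrace_outer: "mtrace (outer v) = of_real ((norm v)^2)"
  by (simp add: mtrace_def outer_def mult_cnj_self norm_vec_power2)

lemma density_eq_sum_outer:
  assumes "density r"
  obtains cs where "r = sum_list (map outer cs)" "(\<Sum>c\<leftarrow>cs. (norm c)^2) = 1"
proof -
  obtain cs where cs: "r = sum_list (map outer cs)"
    using psd_eq_sum_outer assms by (auto simp: density_def)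
  have "1 = Re (mtrace r)" using assms by (simp add: density_def)
  also have "\<dots> = (\<Sum>c\<leftarrow>cs. (norm c)^2)"
    unfolding cs mtrace_sum_list by (induction cs) (simp_all add: mtrace_outer)
  finally show ?thesis using that cs by simp
qed

lemma density_outer: "norm v = 1 \<Longrightarrow> density (outer v)"
  by (simp add: density_def psd_iff_hermitian_nonneg hermitian_def adj_outer quad_form_outer
      mtrace_outer)

section \<open>Energies of separable states\<close>

lemma matrix_add_rdistrib: "(A + B) ** (C::complex^'p^'n) = A ** C + B ** C"
  by (simp add: vec_eq_iff matrix_matrix_mult_def distrib_right sum.distrib)

lemma kron_add_left: "kron (A + B) C = kron A C + kron B C"
  by (simp add: kron_def vec_eq_iff algebra_simps)

lemma kron_add_right: "kron C (A + B) = kron C A + kron C B"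
  by (simp add: kron_def vec_eq_iff algebra_simps)

lemma kron_sum_list_left: "kron (sum_list (map f xs)) B = (\<Sum>x\<leftarrow>xs. kron (f x) B)"
  by (induction xs) (simp_all add: kron_add_left, simp add: kron_def vec_eq_iff)

lemma kron_sum_list_right: "kron B (sum_list (map f xs)) = (\<Sum>x\<leftarrow>xs. kron B (f x))"
  by (induction xs) (simp_all add: kron_add_right, simp add: kron_def vec_eq_iff)

lemma scaleR_matrix_entry: "((t::real) *\<^sub>R (A::complex^'n^'m)) $ i $ j = of_real t * A$i$j"
  unfolding vector_scaleR_component by (simp add: scaleR_conv_of_real)

lemma kron_scaleR: "kron (s *\<^sub>R A) (t *\<^sub>R B) = (s * t) *\<^sub>R kron A B"
  by (simp add: kron_def vec_eq_iff scaleR_matrix_entry)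

lemma outer_scaleR: "outer (t *\<^sub>R v) = t\<^sup>2 *\<^sub>R outer v"
  unfolding outer_def vec_eq_iff vector_scaleR_component vec_lambda_beta
  by (simp add: scaleR_conv_of_real power2_eq_square mult_ac)

lemma energy_add: "energy (A + B) H = energy A H + energy B H"
  by (simp add: energy_def matrix_add_rdistrib mtrace_add)

lemma energy_scaleR: "energy (t *\<^sub>R A) H = t * energy A H"
  by (simp add: energy_def mtrace_def matrix_matrix_mult_def scaleR_matrix_entry
      sum_distrib_left mult.assoc)

lemma linear_energy: "linear (\<lambda>\<rho>. energy \<rho> H)"
  by (rule linearI) (simp_all add: energy_add energy_scaleR)

lemma energy_uminus: "energy \<rho> (- H) = - energy \<rho> H"
  by (simp add: energy_def mtrace_def matrix_matrix_mult_def sum_negf)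

lemma energy_sum_list: "energy (sum_list (map f xs)) H = (\<Sum>x\<leftarrow>xs. energy (f x) H)"
  by (induction xs) (simp_all add: energy_add, simp add: energy_def mtrace_def)

definition product_energy ::
    "complex^('a::finite \<times> 'b::finite)^('a \<times> 'b) \<Rightarrow> complex^'a \<Rightarrow> complex^'b \<Rightarrow> real" where
  "product_energy H v w = energy (kron (outer v) (outer w)) H"

lemma product_energy_uminus: "product_energy (- H) v w = - product_energy H v w"
  by (simp add: product_energy_def energy_uminus)

lemma product_energy_scaleR:
  "product_energy H (s *\<^sub>R v) (t *\<^sub>R w) = (s\<^sup>2 * t\<^sup>2) * product_energy H v w"
  by (simp add: product_energy_def outer_scaleR kron_scaleR energy_scaleR)

lemma product_energy_le_norm:
  assumes unit: "\<And>v w. norm v = 1 \<Longrightarrow> norm w = 1 \<Longrightarrow> product_energy H v w \<le> M"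
  shows "product_energy H v w \<le> M * (norm v)\<^sup>2 * (norm w)\<^sup>2"
proof (cases "v = 0 \<or> w = 0")
  case True
  thus ?thesis by (auto simp: product_energy_def outer_def kron_def energy_def mtrace_def
      matrix_matrix_mult_def)
next
  case False
  define v' where "v' = (1 / norm v) *\<^sub>R v"
  define w' where "w' = (1 / norm w) *\<^sub>R w"
  have "v = norm v *\<^sub>R v'" "w = norm w *\<^sub>R w'" using False by (auto simp: v'_def w'_def)
  hence "product_energy H v w = ((norm v)\<^sup>2 * (norm w)\<^sup>2) * product_energy H v' w'"
    by (metis product_energy_scaleR)
  also have "\<dots> \<le> ((norm v)\<^sup>2 * (norm w)\<^sup>2) * M"
    using False by (intro mult_left_mono unit) (auto simp: v'_def w'_def)
  finally show ?thesis by (simp add: mult_ac)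
qed

lemma energy_kron_density_le:
  assumes "density ra" "density rb"
    and unit: "\<And>v w. norm v = 1 \<Longrightarrow> norm w = 1 \<Longrightarrow> product_energy H v w \<le> M"
  shows "energy (kron ra rb) H \<le> M"
proof -
  obtain cs where cs: "ra = sum_list (map outer cs)" "(\<Sum>c\<leftarrow>cs. (norm c)\<^sup>2) = 1"
    using density_eq_sum_outer[OF assms(1)] by blast
  obtain ds where ds: "rb = sum_list (map outer ds)" "(\<Sum>d\<leftarrow>ds. (norm d)\<^sup>2) = 1"
    using density_eq_sum_outer[OF assms(2)] by blast
  have "energy (kron ra rb) H = (\<Sum>d\<leftarrow>ds. \<Sum>c\<leftarrow>cs. product_energy H c d)"
    by (simp add: cs(1) ds(1) kron_sum_list_left kron_sum_list_right energy_sum_list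
        product_energy_def o_def)
  also have "\<dots> \<le> (\<Sum>d\<leftarrow>ds. \<Sum>c\<leftarrow>cs. M * (norm c)\<^sup>2 * (norm d)\<^sup>2)"
    by (intro sum_list_mono product_energy_le_norm unit)
  also have "\<dots> = M * (\<Sum>c\<leftarrow>cs. (norm c)\<^sup>2) * (\<Sum>d\<leftarrow>ds. (norm d)\<^sup>2)"
    by (simp add: sum_list_const_mult mult.assoc sum_list_mult_const)
  finally show ?thesis using cs(2) ds(2) by simp
qed

lemma energy_Sep_le:
  assumes "\<rho> \<in> Sep"
    and unit: "\<And>v w. norm v = 1 \<Longrightarrow> norm w = 1 \<Longrightarrow> product_energy H v w \<le> M"
  shows "energy \<rho> H \<le> M"
proof -
  have "Sep \<subseteq> (\<lambda>\<rho>. energy \<rho> H) -` {..M}"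
    unfolding Sep_def
    by (rule hull_minimal)
       (auto intro!: convex_linear_vimage linear_energy energy_kron_density_le unit)
  thus ?thesis using assms(1) by blast
qed

lemma kron_outer_in_Sep: "norm v = 1 \<Longrightarrow> norm w = 1 \<Longrightarrow> kron (outer v) (outer w) \<in> Sep"
  unfolding Sep_def by (rule hull_inc) (auto intro: density_outer)

lemma continuous_on_product_energy: "continuous_on S (\<lambda>p. product_energy H (fst p) (snd p))"
proof -
  have "product_energy H v w = Re (\<Sum>i\<in>UNIV. \<Sum>k\<in>UNIV.
      (v$fst i * cnj (v$fst k)) * (w$snd i * cnj (w$snd k)) * H$k$i)" for v w
    by (simp add: product_energy_def energy_def mtrace_def matrix_matrix_mult_def kron_def outer_def)
  thus ?thesis by (simp only:) (intro continuous_intros)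
qed

lemma product_energy_max_attained:
  obtains v w where "norm v = 1" "norm w = 1"
    "\<And>v' w'. norm v' = 1 \<Longrightarrow> norm w' = 1 \<Longrightarrow> product_energy H v' w' \<le> product_energy H v w"
proof -
  let ?S = "sphere (0::complex^'a) 1 \<times> sphere (0::complex^'b) 1"
  have "?S \<noteq> {}" using vector_choose_size[of 1] by (auto simp: Times_empty)
  then obtain p where "p \<in> ?S" "\<forall>q\<in>?S. product_energy H (fst q) (snd q) \<le> product_energy H (fst p) (snd p)"
    using continuous_attains_sup[OF compact_Times[OF compact_sphere compact_sphere] _
        continuous_on_product_energy[of _ H]] by blast
  thus ?thesis by (intro that[of "fst p" "snd p"]) (auto simp: mem_Times_iff)
qed

lemma Sep_energy_extremes:
  fixes H :: "complex^('a::finite \<times> 'b::finite)^('a \<times> 'b)"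
  obtains v1 w1 v0 w0 where "norm v1 = 1" "norm w1 = 1" "norm v0 = 1" "norm w0 = 1"
    "\<And>\<sigma>. \<sigma> \<in> Sep \<Longrightarrow>
       product_energy H v0 w0 \<le> energy \<sigma> H \<and> energy \<sigma> H \<le> product_energy H v1 w1"
proof -
  obtain v1 w1 where max: "norm v1 = 1" "norm w1 = 1"
    "\<And>v w. norm v = 1 \<Longrightarrow> norm w = 1 \<Longrightarrow> product_energy H v w \<le> product_energy H v1 w1"
    using product_energy_max_attained[of H] by blast
  obtain v0 w0 where min: "norm v0 = 1" "norm w0 = 1"
    "\<And>v w. norm v = 1 \<Longrightarrow> norm w = 1 \<Longrightarrow> product_energy (- H) v w \<le> product_energy (- H) v0 w0"
    using product_energy_max_attained[of "- H"] by blast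
  have "product_energy H v0 w0 \<le> energy \<sigma> H \<and> energy \<sigma> H \<le> product_energy H v1 w1"
    if "\<sigma> \<in> Sep" for \<sigma>
    using energy_Sep_le[OF that max(3)] energy_Sep_le[OF that min(3)]
    by (simp add: energy_uminus product_energy_uminus)
  with max(1,2) min(1,2) show ?thesis by (rule that)
qed

section \<open>Local unitary orbits\<close>

lemma kron_mult: "kron A B ** kron C D = kron (A ** C) (B ** D)"
proof -
  have "(\<Sum>r\<in>UNIV. A$a$fst r * B$b$snd r * (C$fst r$c * D$snd r$d)) =
        (\<Sum>r1\<in>UNIV. A$a$r1 * C$r1$c) * (\<Sum>r2\<in>UNIV. B$b$r2 * D$r2$d)" for a b c d
    by (simp add: sum_product sum.cartesian_product case_prod_beta UNIV_Times_UNIV mult_ac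
        flip: UNIV_Times_UNIV)
  thus ?thesis by (simp add: kron_def matrix_matrix_mult_def vec_eq_iff)
qed

lemma adj_kron: "adj (kron A B) = kron (adj A) (adj B)"
  by (simp add: adj_def kron_def vec_eq_iff)

lemma mtrace_mult_commute: "mtrace (A ** B) = mtrace (B ** (A::complex^'n^'n))"
  unfolding mtrace_def matrix_matrix_mult_def
  by (simp, subst sum.swap) (simp add: mult.commute)

lemma density_unitary_conj:
  assumes u: "unitary U" and d: "density r"
  shows "density (U ** r ** adj U)"
proof -
  have "hermitian (U ** r ** adj U)"
    using d by (simp add: density_def psd_def hermitian_def adj_mult matrix_mul_assoc)
  moreover have "quad_form (U ** r ** adj U) x = quad_form r (adj U *v x)" for x
    by (simp add: quad_form_def cinner_adj flip: matrix_vector_mul_assoc)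
  moreover have "mtrace (U ** r ** adj U) = mtrace r"
    using u by (simp add: mtrace_mult_commute[of "U ** r"] unitary_def matrix_mul_assoc)
  ultimately show ?thesis using d by (simp add: density_def psd_iff_hermitian_nonneg)
qed

lemma linear_matrix_conj: "linear (\<lambda>X::complex^'n^'n. K ** X ** L)"
  by (rule linearI)
     (simp_all add: matrix_add_ldistrib matrix_add_rdistrib matrix_scalar_ac
       scalar_matrix_assoc)

lemma Sep_local_unitary_conj:
  assumes "unitary Ua" "unitary Ub" "\<rho> \<in> Sep"
  shows "kron Ua Ub ** \<rho> ** adj (kron Ua Ub) \<in> Sep"
proof -
  let ?f = "\<lambda>X. kron Ua Ub ** X ** adj (kron Ua Ub)"
  let ?P = "{kron ra rb |ra rb. density ra \<and> density rb} :: (complex^('a \<times> 'b)^('a \<times> 'b)) set"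
  have "?f ` ?P \<subseteq> ?P"
    using assms(1,2) by (fastforce simp: adj_kron kron_mult intro: density_unitary_conj)
  moreover have "?f \<rho> \<in> convex hull (?f ` ?P)"
    using in_convex_hull_linear_image[OF linear_matrix_conj] assms(3) unfolding Sep_def by blast
  ultimately show ?thesis unfolding Sep_def using hull_mono by blast
qed

lemma matrix_mult_entry: "(X ** Y)$i$j = (\<Sum>k\<in>UNIV. X$i$k * Y$k$j)"
  by (simp add: matrix_matrix_mult_def)

lemma outer_unitary_conj: "A ** outer v ** adj A = outer (A *v v)"
proof -
  have Av: "(A ** outer v) $ i $ l = (A *v v)$i * cnj (v$l)" for i l
    by (simp add: matrix_matrix_mult_def outer_def matrix_vector_mult_def sum_distrib_right
        mult.assoc)
  have "cnj ((A *v v)$j) = (\<Sum>l\<in>UNIV. cnj (v$l) * cnj (A$j$l))" for j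
    by (simp add: matrix_vector_mult_def mult.commute)
  hence "(A ** outer v ** adj A) $ i $ j = (A *v v)$i * cnj ((A *v v)$j)" for i j
    by (simp only: matrix_mult_entry[of "A ** outer v"] Av)
       (simp add: adj_def sum_distrib_left mult.assoc)
  thus ?thesis by (simp add: vec_eq_iff outer_def)
qed

lemma unitary_mat_1: "unitary (mat 1)"
  by (simp add: unitary_def adj_mat[of 1, simplified])

definition householder :: "complex \<Rightarrow> complex^'n \<Rightarrow> complex^'n^'n" where
  "householder a u = (\<chi> i j. (if i = j then 1 else 0) - a * u$i * cnj (u$j))"

lemma householder_apply: "(householder a u *v x)$i = x$i - a * u$i * cinner u x"
proof -
  have "(householder a u *v x)$i =
      (\<Sum>j\<in>UNIV. (if i = j then x$j else 0) - a * u$i * (cnj (u$j) * x$j))"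
    unfolding householder_def matrix_vector_mult_def vec_lambda_beta
    by (rule sum.cong) (auto simp: left_diff_distrib mult.assoc)
  also have "\<dots> = x$i - a * u$i * cinner u x"
    by (simp add: sum_subtractf cinner_def sum_distrib_left)
  finally show ?thesis .
qed

lemma unitary_householder:
  assumes a_real: "cnj a = a" and a_norm: "a * cinner u u = 2"
  shows "unitary (householder a u)"
proof -
  have adj: "adj (householder a u) = householder a u"
    by (simp add: adj_def householder_def vec_eq_iff a_real mult.commute mult.left_commute)
  have "(householder a u ** householder a u) $ i $ j = mat 1 $ i $ j" for i j
  proof -
    let ?c = "\<chi> k. householder a u $ k $ j"
    have "cinner u ?c = cnj (u$j) - a * cnj (u$j) * cinner u u"
    proof -
      have "cinner u ?c = (\<Sum>k\<in>UNIV. (if k = j then cnj (u$k) else 0)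
          - a * cnj (u$j) * (cnj (u$k) * u$k))"
        unfolding cinner_def householder_def vec_lambda_beta
        by (rule sum.cong) (auto simp: right_diff_distrib mult_ac)
      thus ?thesis by (simp add: sum_subtractf cinner_def sum_distrib_left)
    qed
    also have "\<dots> = - cnj (u$j)" using a_norm by (simp add: algebra_simps)
    finally have "cinner u ?c = - cnj (u$j)" .
    have "(householder a u ** householder a u) $ i $ j = (householder a u *v ?c)$i"
      by (simp add: matrix_matrix_mult_def matrix_vector_mult_def)
    also have "\<dots> = ?c$i - a * u$i * cinner u ?c" by (rule householder_apply)
    also have "\<dots> = mat 1 $ i $ j" using \<open>cinner u ?c = - cnj (u$j)\<close>
      by (simp add: householder_def mat_def)
    finally show ?thesis .
  qed
  hence "householder a u ** householder a u = mat 1" by (simp add: vec_eq_iff)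
  thus ?thesis by (simp add: unitary_def adj)
qed

lemma unitary_map_real_overlap:
  assumes nv: "norm v = 1" and nw: "norm w = 1" and r: "cinner w v \<in> \<real>"
  obtains U where "unitary U" "U *v v = w"
proof (cases "v = w")
  case True thus ?thesis using unitary_mat_1 by (intro that[of "mat 1"]) simp_all
next
  case False
  define u where "u = v - w"
  obtain r0 where r0: "cinner w v = of_real r0" using r by (auto elim: Reals_cases)
  have vw: "cinner v w = of_real r0" using r0 cinner_commute[of w v] by simp
  have vv: "cinner v v = 1" "cinner w w = 1" using nv nw by (simp_all add: cinner_self)
  have uv: "cinner u v = 1 - of_real r0" by (simp add: u_def cinner_diff_left vv r0)
  have uu: "cinner u u = 2 * (1 - of_real r0)"
    by (simp add: u_def cinner_diff_left cinner_diff_right vv r0 vw)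
  have "u \<noteq> 0" using False by (simp add: u_def)
  hence uu0: "cinner u u \<noteq> 0" by (simp add: cinner_self)
  define a where "a = 2 / cinner u u"
  have "unitary (householder a u)"
    using uu0 by (intro unitary_householder) (simp_all add: a_def cinner_self)
  moreover have "householder a u *v v = w"
  proof -
    have a1: "a * (1 - of_real r0) = 1" using uu0 by (simp add: a_def uu)
    have "(householder a u *v v)$i = w$i" for i
    proof -
      have "(householder a u *v v)$i = v$i - (a * (1 - of_real r0)) * u$i"
        by (simp add: householder_apply uv mult_ac)
      thus ?thesis by (simp add: a1 u_def)
    qed
    thus ?thesis by (simp add: vec_eq_iff)
  qed
  ultimately show ?thesis by (rule that)
qed

text \<open>Multiply \<open>w\<close> by a phase making its overlap with \<open>v\<close> real, then reflect.\<close>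

lemma unitary_map_outer:
  assumes nv: "norm v = 1" and nw: "norm w = 1"
  obtains U where "unitary U" "outer (U *v v) = outer w"
proof -
  define p where "p = cinner w v"
  define z where "z = (if p = 0 then 1 else p / of_real (cmod p))"
  have pp: "cnj p * p = of_real (cmod p) * of_real (cmod p)"
    "p * cnj p = of_real (cmod p) * of_real (cmod p)"
    using mult_cnj_self[of p] by (simp_all add: mult.commute power2_eq_square)
  have z: "z * cnj z = 1"
    by (cases "p = 0") (simp_all add: z_def pp mult.commute)
  have cz: "cmod z = 1" by (cases "p = 0") (simp_all add: z_def norm_divide)
  have "outer (z *s w) = outer w"
  proof -
    have "z * w$i * (cnj z * cnj (w$j)) = w$i * cnj (w$j)" for i j
      using z by (simp add: algebra_simps)
    thus ?thesis by (simp add: outer_def vec_eq_iff)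
  qed
  moreover have "norm (z *s w) = 1"
  proof -
    have "(norm (z *s w))\<^sup>2 = (norm w)\<^sup>2" by (simp add: norm_vec_power2 norm_mult cz)
    thus ?thesis using nw power2_eq_iff_nonneg[of "norm (z *s w)" "norm w"] by simp
  qed
  moreover have "cinner (z *s w) v \<in> \<real>"
  proof -
    have "cinner (z *s w) v = cnj z * p"
      by (simp add: cinner_def p_def sum_distrib_left mult.assoc)
    also have "\<dots> = of_real (cmod p)"
      by (cases "p = 0") (simp_all add: z_def pp)
    finally show ?thesis by simp
  qed
  ultimately show ?thesis using unitary_map_real_overlap[OF nv] that by metis
qed

section \<open>Extreme eigenvalues of Hermitian matrices\<close>

lemma finite_real_eigenvalues:
  assumes h: "hermitian (H::complex^'n^'n)"
  shows "finite (real_eigenvalues H)"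
proof -
  let ?S = "real_eigenvalues H"
  define ev where "ev x = (SOME v. v \<noteq> 0 \<and> H *v v = x *\<^sub>R v)" for x
  have ev: "ev x \<noteq> 0" "H *v ev x = x *\<^sub>R ev x" if "x \<in> ?S" for x
    using someI_ex[of "\<lambda>v. v \<noteq> 0 \<and> H *v v = x *\<^sub>R v"] that
    by (auto simp: real_eigenvalues_def ev_def)
  have inj: "inj_on ev ?S"
  proof (rule inj_onI)
    fix x y assume x: "x \<in> ?S" and y: "y \<in> ?S" and e: "ev x = ev y"
    have "x *\<^sub>R ev x = y *\<^sub>R ev x" using ev(2)[OF x] ev(2)[OF y] e by metis
    thus "x = y" using ev(1)[OF x] by simp
  qed
  have orth: "cinner (ev y) (ev x) = 0" if x: "x \<in> ?S" and y: "y \<in> ?S" and "x \<noteq> y" for x y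
  proof -
    have "of_real x * cinner (ev y) (ev x) = cinner (ev y) (H *v ev x)"
      by (simp only: ev(2)[OF x] cinner_scaleR_right)
    also have "\<dots> = cinner (H *v ev y) (ev x)"
      using h by (simp add: cinner_adj hermitian_def)
    also have "\<dots> = of_real y * cinner (ev y) (ev x)"
      by (simp only: ev(2)[OF y] cinner_scaleR_left)
    finally have "(of_real x - of_real y) * cinner (ev y) (ev x) = 0"
      by (simp add: left_diff_distrib)
    thus ?thesis using \<open>x \<noteq> y\<close> by simp
  qed
  have "pairwise orthogonal (ev ` ?S)"
    unfolding pairwise_def orthogonal_def inner_vec_eq_Re_cinner using orth by fastforce
  moreover have "0 \<notin> ev ` ?S" by (metis ev(1) imageE)
  ultimately have "independent (ev ` ?S)" by (rule pairwise_orthogonal_independent)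
  hence "finite (ev ` ?S)" by (rule independent_imp_finite)
  thus ?thesis using inj by (rule finite_imageD)
qed

lemma matrix_vector_mult_mat: "mat c *v v = c *s (v::complex^'n)"
proof -
  have "(\<Sum>j\<in>UNIV. (if i = j then c else 0) * v$j) = c * v$i" for i
  proof -
    have "(\<Sum>j\<in>UNIV. (if i = j then c else 0) * v$j) = (\<Sum>j\<in>UNIV. if j = i then c * v$i else 0)"
      by (rule sum.cong) auto
    thus ?thesis by simp
  qed
  thus ?thesis by (simp add: vec_eq_iff matrix_vector_mult_def mat_def)
qed

lemma cinner_smult_right: "cinner x (c *s y) = c * cinner x y"
  by (simp add: cinner_def sum_distrib_left mult_ac)

lemma continuous_on_quad_form: "continuous_on S (\<lambda>v. Re (quad_form H v))"
  unfolding quad_form_def cinner_def matrix_vector_mult_def vec_lambda_beta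
  by (intro continuous_intros)

text \<open>The maximum \<open>l\<close> of the quadratic form on the unit sphere is an eigenvalue:
  \<open>l I - H\<close> is positive semidefinite and its form vanishes at the maximiser.\<close>

lemma real_eigenvalues_nonempty:
  assumes h: "hermitian (H::complex^'n^'n)"
  shows "real_eigenvalues H \<noteq> {}"
proof -
  have "sphere (0::complex^'n) 1 \<noteq> {}" using vector_choose_size[of 1] by auto
  from continuous_attains_sup[OF compact_sphere this continuous_on_quad_form[of _ H]]
  obtain v0 where v0: "norm v0 = 1"
    and max: "\<And>v. norm v = 1 \<Longrightarrow> Re (quad_form H v) \<le> Re (quad_form H v0)"
    by auto
  define l where "l = Re (quad_form H v0)"
  define M where "M = mat (of_real l) - H"
  have "Re (quad_form H v) \<le> l * (norm v)\<^sup>2" for v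
  proof (cases "v = 0")
    case False
    define u where "u = (1 / norm v) *\<^sub>R v"
    have v: "v = norm v *\<^sub>R u" using False by (simp add: u_def)
    have "Re (quad_form H v) = (norm v)\<^sup>2 * Re (quad_form H u)"
      by (subst v) (simp add: quad_form_scaleR)
    also have "\<dots> \<le> (norm v)\<^sup>2 * l"
      using False by (intro mult_left_mono) (auto simp: l_def u_def intro: max)
    finally show ?thesis by (simp add: mult.commute)
  qed (simp add: quad_form_def cinner_def)
  moreover have qM: "quad_form M v = of_real (l * (norm v)\<^sup>2) - quad_form H v" for v
    unfolding M_def quad_form_diff
    by (simp add: quad_form_def matrix_vector_mult_mat cinner_smult_right cinner_self)
  moreover have "hermitian M"
    using h by (simp add: M_def hermitian_def adj_diff adj_mat)
  ultimately have "psd M" by (simp add: psd_iff_hermitian_nonneg)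
  moreover have "Re (quad_form M v0) = 0" by (simp add: qM v0 l_def)
  ultimately have "M *v v0 = 0"
    using psd_cauchy_schwarz[of M v0] by (simp add: vec_eq_iff)
  hence "\<forall>i. (H *v v0)$i = of_real l * v0$i"
    by (simp add: M_def matrix_vector_mult_diff_rdistrib matrix_vector_mult_mat vec_eq_iff)
  hence "H *v v0 = l *\<^sub>R v0"
    unfolding vec_eq_iff vector_scaleR_component by (simp add: scaleR_conv_of_real)
  moreover have "v0 \<noteq> 0" using v0 by auto
  ultimately show ?thesis unfolding real_eigenvalues_def by blast
qed

lemma real_eigenvalues_uminus: "real_eigenvalues (- H) = uminus ` real_eigenvalues H"
proof -
  have "(- H) *v v = - (H *v v)" for v
    by (simp add: vec_eq_iff matrix_vector_mult_def sum_negf)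
  hence "(- H) *v v = x *\<^sub>R v \<longleftrightarrow> H *v v = (- x) *\<^sub>R v" for v x
    by (metis minus_minus scaleR_minus_left)
  hence "x \<in> real_eigenvalues (- H) \<longleftrightarrow> - x \<in> real_eigenvalues H" for x
    by (simp add: real_eigenvalues_def)
  thus ?thesis by (force simp: image_iff)
qed

lemma Emax_add_E0_uminus:
  assumes "hermitian H"
  shows "Emax H + E0 (- H) = 0"
proof -
  let ?S = "real_eigenvalues H"
  have "finite ?S" "?S \<noteq> {}"
    using finite_real_eigenvalues real_eigenvalues_nonempty assms by auto
  hence "Min (uminus ` ?S) = - Max ?S"
    by (intro Min_eqI) auto
  thus ?thesis by (simp add: Emax_def E0_def real_eigenvalues_uminus)
qed

section \<open>The parallel capacity of separable states\<close>

lemma local_unitary_energy_bounds: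
  assumes "\<rho> \<in> Sep" "unitary Ua" "unitary Ub"
    and bnd: "\<And>\<sigma>. \<sigma> \<in> Sep \<Longrightarrow> m \<le> energy \<sigma> H \<and> energy \<sigma> H \<le> M"
  shows "m \<le> energy (kron Ua Ub ** \<rho> ** adj (kron Ua Ub)) H
    \<and> energy (kron Ua Ub ** \<rho> ** adj (kron Ua Ub)) H \<le> M"
  using bnd[OF Sep_local_unitary_conj[OF assms(2,3,1)]] .

lemma CP_Sep_le:
  fixes H :: "complex^('a::finite \<times> 'b::finite)^('a \<times> 'b)"
  assumes "\<rho> \<in> Sep" and bnd: "\<And>\<sigma>. \<sigma> \<in> Sep \<Longrightarrow> m \<le> energy \<sigma> H \<and> energy \<sigma> H \<le> M"
  shows "CP \<rho> H \<le> M - m"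
proof -
  let ?X = "{(Ua :: complex^'a^'a, Ub :: complex^'b^'b). unitary Ua \<and> unitary Ub}"
  let ?f = "\<lambda>(Ua, Ub). energy (kron Ua Ub ** \<rho> ** adj (kron Ua Ub)) H"
  have "(mat 1, mat 1) \<in> ?X" by (simp add: unitary_mat_1)
  hence ne: "?X \<noteq> {}" by blast
  have bounds: "m \<le> ?f p \<and> ?f p \<le> M" if "p \<in> ?X" for p
    using that by (cases p) (simp add: local_unitary_energy_bounds[OF assms(1) _ _ bnd])
  have "Sup (?f ` ?X) \<le> M" by (rule cSUP_least[OF ne]) (use bounds in blast)
  moreover have "m \<le> Inf (?f ` ?X)" by (rule cINF_greatest[OF ne]) (use bounds in blast)
  ultimately show ?thesis unfolding CP_def by linarith
qed

lemma energy_diff_le_CP: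
  fixes H :: "complex^('a::finite \<times> 'b::finite)^('a \<times> 'b)"
  assumes "\<rho> \<in> Sep" and bnd: "\<And>\<sigma>. \<sigma> \<in> Sep \<Longrightarrow> m \<le> energy \<sigma> H \<and> energy \<sigma> H \<le> M"
    and "unitary Ua" "unitary Ub" "unitary Va" "unitary Vb"
  shows "energy (kron Va Vb ** \<rho> ** adj (kron Va Vb)) H
    - energy (kron Ua Ub ** \<rho> ** adj (kron Ua Ub)) H \<le> CP \<rho> H"
proof -
  let ?X = "{(Ua :: complex^'a^'a, Ub :: complex^'b^'b). unitary Ua \<and> unitary Ub}"
  let ?f = "\<lambda>(Ua, Ub). energy (kron Ua Ub ** \<rho> ** adj (kron Ua Ub)) H"
  have bounds: "m \<le> ?f p \<and> ?f p \<le> M" if "p \<in> ?X" for p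
    using that by (cases p) (simp add: local_unitary_energy_bounds[OF assms(1) _ _ bnd])
  have "bdd_above (?f ` ?X)" by (rule bdd_aboveI2) (use bounds in blast)
  hence sup: "?f (Va, Vb) \<le> Sup (?f ` ?X)"
    by (rule cSUP_upper[rotated]) (use assms(5,6) in simp)
  have "bdd_below (?f ` ?X)" by (rule bdd_belowI2) (use bounds in blast)
  hence inf: "Inf (?f ` ?X) \<le> ?f (Ua, Ub)" by (rule cINF_lower) (use assms(3,4) in simp)
  show ?thesis using sup inf unfolding CP_def by simp
qed

text \<open>Local unitaries rotate a maximising product state onto a minimising one.\<close>

lemma CP_kron_outer_eq:
  fixes H :: "complex^('a::finite \<times> 'b::finite)^('a \<times> 'b)"
  assumes "norm v1 = 1" "norm w1 = 1" "norm v0 = 1" "norm w0 = 1"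
    and bnd: "\<And>\<sigma>. \<sigma> \<in> Sep \<Longrightarrow>
       product_energy H v0 w0 \<le> energy \<sigma> H \<and> energy \<sigma> H \<le> product_energy H v1 w1"
  shows "CP (kron (outer v1) (outer w1)) H = product_energy H v1 w1 - product_energy H v0 w0"
proof -
  let ?r = "kron (outer v1) (outer w1)"
  have r: "?r \<in> Sep" using kron_outer_in_Sep assms(1,2) by blast
  have conj: "energy (kron Ua Ub ** ?r ** adj (kron Ua Ub)) H
      = product_energy H (Ua *v v1) (Ub *v w1)" for Ua Ub
    by (simp add: adj_kron kron_mult outer_unitary_conj product_energy_def)
  obtain Ua where Ua: "unitary Ua" "outer (Ua *v v1) = outer v0"
    using unitary_map_outer[OF assms(1,3)] .
  obtain Ub where Ub: "unitary Ub" "outer (Ub *v w1) = outer w0"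
    using unitary_map_outer[OF assms(2,4)] .
  have "product_energy H v1 w1 - product_energy H v0 w0 \<le> CP ?r H"
    using energy_diff_le_CP[OF r bnd Ua(1) Ub(1) unitary_mat_1 unitary_mat_1]
    by (simp add: conj product_energy_def Ua(2) Ub(2))
  with CP_Sep_le[OF r bnd] show ?thesis by linarith
qed

lemma CP1_eq_product_energy_spread:
  fixes H :: "complex^('a::finite \<times> 'b::finite)^('a \<times> 'b)"
  assumes "norm v1 = 1" "norm w1 = 1" "norm v0 = 1" "norm w0 = 1"
    and bnd: "\<And>\<sigma>. \<sigma> \<in> Sep \<Longrightarrow>
       product_energy H v0 w0 \<le> energy \<sigma> H \<and> energy \<sigma> H \<le> product_energy H v1 w1"
  shows "CP1 H = product_energy H v1 w1 - product_energy H v0 w0"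
  unfolding CP1_def
proof (rule cSup_eq_maximum)
  show "product_energy H v1 w1 - product_energy H v0 w0 \<in> (\<lambda>\<rho>. CP \<rho> H) ` Sep"
    using kron_outer_in_Sep[OF assms(1,2)] CP_kron_outer_eq[OF assms] by (metis image_eqI)
qed (use CP_Sep_le[OF _ bnd] in auto)

theorem theorem1:
  fixes H :: "complex^('a::finite \<times> 'b::finite)^('a \<times> 'b)"
  assumes "hermitian H"
  shows "CP1 H = opnorm_inf H - (gapSep H + gapSep (- H))"
proof -
  obtain v1 w1 v0 w0 where unit: "norm v1 = 1" "norm w1 = 1" "norm v0 = 1" "norm w0 = 1"
    and bnd: "\<And>\<sigma>. \<sigma> \<in> Sep \<Longrightarrow>
       product_energy H v0 w0 \<le> energy \<sigma> H \<and> energy \<sigma> H \<le> product_energy H v1 w1"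
    using Sep_energy_extremes[of H] by blast
  define M where "M = product_energy H v1 w1"
  define m where "m = product_energy H v0 w0"
  have "CP1 H = M - m"
    unfolding M_def m_def by (rule CP1_eq_product_energy_spread[OF unit bnd])
  moreover have "(INF \<rho>\<in>Sep. energy \<rho> H) = m"
    using kron_outer_in_Sep[OF unit(3,4)] bnd
    by (intro cInf_eq_minimum) (auto simp: m_def product_energy_def)
  moreover have "(INF \<rho>\<in>Sep. energy \<rho> (- H)) = - M"
    using kron_outer_in_Sep[OF unit(1,2)] bnd
    by (intro cInf_eq_minimum) (auto simp: M_def product_energy_def energy_uminus)
  moreover have "Emax H + E0 (- H) = 0" by (rule Emax_add_E0_uminus[OF assms])
  ultimately show ?thesis unfolding gapSep_def opnorm_inf_def by linarith
qed

end
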